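(* For even $n\ge4$, let $\bar P_n$ denote the maximum of $\bar P(\mathsf{M}^{(1)},\mathsf{M}^{(2)})$ over all pairs of dichotomic measurements on the regular $n$-gon state space $\mathcal{S}_n$. Then, for every integer $m\ge1$: (i) if $n=4m$ with $m$ odd, $\bar P_n=\frac12\big(1+\frac{\sec(\pi/n)}{\sqrt2}\big)$; (ii) if $n=4m$ with $m$ even, $\bar P_n=\frac12\big(1+\frac{1}{\sqrt2}\big)$; (iii) if $n=4m+2$ with $m$ odd, $\bar P_n=\frac14\big[2+\sec(\pi/n)\cos(m\pi/n)+\sin(m\pi/n)\big]$; (iv) if $n=4m+2$ with $m$ even, $\bar P_n=\frac14\big[2+\cos(m\pi/n)+\sec(\pi/n)\sin(m\pi/n)\big]$.
   Context: The regular $n$-gon state space $\mathcal{S}_n\subset\mathbb{R}^3$ is the convex hull of $s_j=(r_n\cos(2j\pi/n),\,r_n\sin(2j\pi/n),\,1)^T$, $j=1,\ldots,n$, with $r_n=\sqrt{\sec(\pi/n)}$. Effects are linear functionals $e$ on $\mathbb{R}^3$ with $0\le e\le1$ on $\mathcal{S}_n$; unit effect $u=(0,0,1)$; $\|f\|=\max_{s\in\mathcal{S}_n}|f(s)|$. A dichotomic measurement is a pair of effects $\mathsf{M}_+,\mathsf{M}_-$ with $\mathsf{M}_++\mathsf{M}_-=u$, and $\bar P(\mathsf{M}^{(1)},\mathsf{M}^{(2)})=\frac18\sum_{x,y\in\{+,-\}}\|\mathsf{M}^{(1)}_x+\mathsf{M}^{(2)}_y\|$. *)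

theory Defs
  imports "HOL-Analysis.Analysis"
begin

definition sec :: "real \<Rightarrow> real" where
  "sec x = 1 / cos x"

definition r_ngon :: "nat \<Rightarrow> real" where
  "r_ngon n = sqrt (sec (pi / real n))"

definition vert :: "nat \<Rightarrow> nat \<Rightarrow> real^3" where
  "vert n j = vector [r_ngon n * cos (2 * real j * pi / real n),
                      r_ngon n * sin (2 * real j * pi / real n), 1]"

definition state_space :: "nat \<Rightarrow> (real^3) set" where
  "state_space n = convex hull (vert n ` {1..n})"

(* linear functionals on R^3 are represented by vectors f, acting as s \<mapsto> f \<bullet> s *)
definition unit_eff :: "real^3" where
  "unit_eff = vector [0, 0, 1]"

definition is_effect :: "nat \<Rightarrow> real^3 \<Rightarrow> bool" where
  "is_effect n e \<longleftrightarrow> (\<forall>s\<in>state_space n. 0 \<le> e \<bullet> s \<and> e \<bullet> s \<le> 1)"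

definition fnorm :: "nat \<Rightarrow> real^3 \<Rightarrow> real" where
  "fnorm n f = Sup ((\<lambda>s. \<bar>f \<bullet> s\<bar>) ` state_space n)"

definition is_dich_meas :: "nat \<Rightarrow> (real^3) \<times> (real^3) \<Rightarrow> bool" where
  "is_dich_meas n M \<longleftrightarrow> is_effect n (fst M) \<and> is_effect n (snd M) \<and> fst M + snd M = unit_eff"

definition Pbar :: "nat \<Rightarrow> (real^3) \<times> (real^3) \<Rightarrow> (real^3) \<times> (real^3) \<Rightarrow> real" where
  "Pbar n M1 M2 = (1/8) * (fnorm n (fst M1 + fst M2) + fnorm n (fst M1 + snd M2)
                          + fnorm n (snd M1 + fst M2) + fnorm n (snd M1 + snd M2))"

definition Pbar_vals :: "nat \<Rightarrow> real set" where
  "Pbar_vals n = {Pbar n M1 M2 | M1 M2. is_dich_meas n M1 \<and> is_dich_meas n M2}"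

definition Pbar_max :: "nat \<Rightarrow> real" where
  "Pbar_max n = (GREATEST v. v \<in> Pbar_vals n)"

end

theory Submission
  imports Defs
begin

text \<open>
On the vertices an effect reads e(s_k) = e_3 + L_e(2k\<pi>/n) with the sinusoid
L_e(x) = r_n (e_1 cos x + e_2 sin x), called osc below. For n = 2p the vertices s_k and
s_(k+p) are antipodal, so 0 \<le> e \<le> 1 forces |L_e| \<le> 1/2 at the even multiples of \<pi>/n, and
L(x+y) + L(x-y) = 2 cos y L(x) then gives |L_e| \<le> sec(\<pi>/n)/2 at the odd multiples.
Each norm in P-bar is attained at a vertex, and with M_- = u - M_+ the four vertex values
add up to 4 plus two terms of the form
L_e(x+y) + L_e(x-y) + L_f(x+y) - L_f(x-y) = 2 cos y L_e(x) + 2 sin y L_f(x + \<pi>/2),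
where x and y are multiples of \<pi>/n. Bounding these by the vertex bounds gives
P-bar \<le> 1/2 + K/4 for an explicit K depending on n modulo 8, and effects whose L is an
extremal sinusoid c cos(x - j\<pi>/n) attain it.
\<close>

section \<open>Effects as sinusoids on the vertices\<close>

definition osc :: "nat \<Rightarrow> real^3 \<Rightarrow> real \<Rightarrow> real" where
  "osc n g x = r_ngon n * (g$1 * cos x + g$2 * sin x)"

lemma inner_vert: "g \<bullet> vert n k = g$3 + osc n g (real (2*k) * pi / real n)"
  by (simp add: vert_def osc_def inner_vec_def sum_3 algebra_simps)

lemma unit_eff_inner_vert [simp]: "unit_eff \<bullet> vert n k = 1"
  by (simp add: vert_def unit_eff_def inner_vec_def sum_3)

lemma osc_add_pi: "osc n g (x + pi) = - osc n g x"
  by (simp add: osc_def algebra_simps)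

lemma osc_sum_to_product: "osc n g (x + y) + osc n g (x - y) = 2 * cos y * osc n g x"
  by (simp add: osc_def cos_add cos_diff sin_add sin_diff algebra_simps)

lemma osc_diff_to_product: "osc n g (x + y) - osc n g (x - y) = 2 * sin y * osc n g (x + pi/2)"
  by (simp add: osc_def cos_add cos_diff sin_add sin_diff algebra_simps)

lemma vert_mod: "vert n (k mod n) = vert n k"
proof (cases "n = 0")
  case False
  have "real k = real (k mod n) + real n * real (k div n)"
    by (metis mod_div_mult_eq mult.commute of_nat_add of_nat_mult)
  then have "2 * real k * pi / real n = 2 * real (k mod n) * pi / real n + (2 * pi) * real (k div n)"
    using False by (simp add: field_simps)
  moreover have "cos ((2 * pi) * real (k div n)) = 1" "sin ((2 * pi) * real (k div n)) = 0"
    using cos_int_2pin[of "int (k div n)"] sin_int_2pin[of "int (k div n)"] by simp_all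
  ultimately show ?thesis
    unfolding vert_def by (simp add: cos_add sin_add)
qed simp

lemma vert_add_period: "vert n (k + n) = vert n k"
  by (metis mod_add_self2 vert_mod)

lemma vert_in_state_space:
  assumes "0 < n" shows "vert n k \<in> state_space n"
proof -
  have "vert n k \<in> vert n ` {1..n}"
  proof (cases "k mod n = 0")
    case True
    then have "vert n k = vert n n" by (metis mod_self vert_mod)
    then show ?thesis using assms by auto
  next
    case False
    then have "k mod n \<in> {1..n}" using assms by (simp add: Suc_leI less_imp_le)
    then show ?thesis by (metis image_eqI vert_mod)
  qed
  then show ?thesis unfolding state_space_def by (rule hull_inc)
qed

lemma inner_vert_antipodal:
  assumes "n = 2*p" "0 < p"
  shows "g \<bullet> vert n (k + p) = g$3 - osc n g (real (2*k) * pi / real n)"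
proof -
  have "real (2*(k+p)) * pi / real n = real (2*k) * pi / real n + pi"
    using assms by (simp add: field_simps)
  then show ?thesis by (simp add: inner_vert osc_add_pi)
qed

lemma state_space_subset_halfspace:
  assumes "\<And>k. k \<in> {1..n} \<Longrightarrow> g \<bullet> vert n k \<le> c"
  shows "state_space n \<subseteq> {s. g \<bullet> s \<le> c}"
  unfolding state_space_def using assms by (intro hull_minimal convex_halfspace_le) auto

lemma is_effect_iff_vertices:
  assumes "0 < n"
  shows "is_effect n g \<longleftrightarrow> (\<forall>k. 0 \<le> g \<bullet> vert n k \<and> g \<bullet> vert n k \<le> 1)"
proof
  assume "\<forall>k. 0 \<le> g \<bullet> vert n k \<and> g \<bullet> vert n k \<le> 1"
  then have "state_space n \<subseteq> {s. g \<bullet> s \<le> 1}" "state_space n \<subseteq> {s. (- g) \<bullet> s \<le> 0}"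
    using state_space_subset_halfspace[of n g 1] state_space_subset_halfspace[of n "- g" 0]
    by simp_all
  then show "is_effect n g" unfolding is_effect_def by (fastforce simp: subset_iff)
qed (use assms vert_in_state_space in \<open>auto simp: is_effect_def\<close>)

lemma inner_vert_le_fnorm:
  assumes "0 < n" shows "g \<bullet> vert n k \<le> fnorm n g"
proof -
  have "compact (state_space n)"
    unfolding state_space_def by (intro compact_convex_hull finite_imp_compact) simp
  then have "bdd_above ((\<lambda>s. \<bar>g \<bullet> s\<bar>) ` state_space n)"
    by (intro bounded_imp_bdd_above compact_imp_bounded compact_continuous_image continuous_intros)
  then have "\<bar>g \<bullet> vert n k\<bar> \<le> fnorm n g"
    unfolding fnorm_def using vert_in_state_space[OF assms] by (intro cSup_upper) auto
  then show ?thesis by linarith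
qed

lemma fnorm_eq_inner_vert:
  assumes "0 < n" and nonneg: "\<And>s. s \<in> state_space n \<Longrightarrow> 0 \<le> g \<bullet> s"
  obtains k where "fnorm n g = g \<bullet> vert n k"
proof -
  let ?vals = "(\<lambda>j. g \<bullet> vert n j) ` {1..n}"
  have fin: "finite ?vals" and "?vals \<noteq> {}" using assms by auto
  then have "Max ?vals \<in> ?vals" by (rule Max_in)
  then obtain k where k: "g \<bullet> vert n k = Max ?vals" by auto
  have "\<And>j. j \<in> {1..n} \<Longrightarrow> g \<bullet> vert n j \<le> g \<bullet> vert n k"
    unfolding k using fin by (intro Max_ge) auto
  then have "state_space n \<subseteq> {s. g \<bullet> s \<le> g \<bullet> vert n k}"
    by (rule state_space_subset_halfspace)
  then have "fnorm n g \<le> g \<bullet> vert n k"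
    unfolding fnorm_def using nonneg vert_in_state_space[OF assms(1)]
    by (intro cSup_least) auto
  with inner_vert_le_fnorm[OF assms(1)] that show thesis by (meson order_antisym)
qed

section \<open>Bounds for effects on the 2p-gon\<close>

lemma cos_pi_div_gt_zero:
  assumes "2 < n" shows "0 < cos (pi / real n)"
proof (rule cos_gt_zero)
  show "pi / real n < pi / 2" using assms by (intro divide_strict_left_mono) auto
qed (use assms in simp)

definition osc_bound :: "nat \<Rightarrow> nat \<Rightarrow> real" where
  "osc_bound n j = (if even j then 1 else sec (pi / real n))"

lemma effect_osc_even_le:
  assumes "n = 2*p" "0 < p" "is_effect n e"
  shows "\<bar>osc n e (real (2*k) * pi / real n)\<bar> \<le> 1/2"
proof -
  have "0 \<le> e \<bullet> vert n k" "e \<bullet> vert n k \<le> 1" "0 \<le> e \<bullet> vert n (k+p)" "e \<bullet> vert n (k+p) \<le> 1"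
    using assms is_effect_iff_vertices[of n e] by auto
  then show ?thesis
    using inner_vert_antipodal[OF assms(1,2), of e k] inner_vert[of e n k] by linarith
qed

lemma effect_osc_le:
  assumes "n = 2*p" "2 \<le> p" "is_effect n e"
  shows "\<bar>osc n e (real j * pi / real n)\<bar> \<le> osc_bound n j / 2"
proof (cases "even j")
  case True
  then obtain k where "j = 2*k" by blast
  then show ?thesis using effect_osc_even_le[OF assms(1) _ assms(3), of k] assms(2) True
    by (simp add: osc_bound_def)
next
  case False
  then obtain k where k: "j = 2*k + 1" using oddE by blast
  have c: "0 < cos (pi / real n)" using assms by (intro cos_pi_div_gt_zero) simp
  let ?x = "real j * pi / real n" and ?y = "pi / real n"
  have "?x + ?y = real (2*(k+1)) * pi / real n" "?x - ?y = real (2*k) * pi / real n"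
    using k by (simp_all add: add_divide_distrib[symmetric] diff_divide_distrib[symmetric] algebra_simps)
  then have "2 * cos ?y * osc n e ?x
      = osc n e (real (2*(k+1)) * pi / real n) + osc n e (real (2*k) * pi / real n)"
    using osc_sum_to_product[of n e ?x ?y] by simp
  then have "2 * cos ?y * \<bar>osc n e ?x\<bar> \<le> 1"
    using effect_osc_even_le[OF assms(1) _ assms(3), of "k+1"]
      effect_osc_even_le[OF assms(1) _ assms(3), of k] assms(2) c
    by (simp add: abs_mult)
  then show ?thesis using False c by (simp add: osc_bound_def sec_def field_simps)
qed

lemma abs_cos_sin_fold:
  fixes t :: int
  assumes "n = 2*p" "0 < p"
  obtains d where "d \<le> p" "even d \<longleftrightarrow> even t"
    "\<bar>cos (of_int t * pi / real n)\<bar> = cos (real d * pi / real n)"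
    "\<bar>sin (of_int t * pi / real n)\<bar> = sin (real d * pi / real n)"
proof -
  define r where "r = nat (t mod int n)"
  have r: "r < n" "t = int r + int n * (t div int n)"
    using assms unfolding r_def by (simp_all add: nat_less_iff)
  have "of_int t * pi / real n = real r * pi / real n + pi * of_int (t div int n)"
    using assms by (subst r(2)) (simp add: field_simps)
  then have abs_r: "\<bar>cos (of_int t * pi / real n)\<bar> = \<bar>cos (real r * pi / real n)\<bar>"
      "\<bar>sin (of_int t * pi / real n)\<bar> = \<bar>sin (real r * pi / real n)\<bar>"
    by (simp_all add: cos_add sin_add abs_mult)
  have parity: "even r \<longleftrightarrow> even t"
    using assms by (subst r(2)) simp
  have nonneg: "0 \<le> cos (real d * pi / real n)" "0 \<le> sin (real d * pi / real n)" if "d \<le> p" for d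
  proof -
    have x: "real d * pi / real n \<le> pi / 2" "0 \<le> real d * pi / real n"
      using that assms by (simp_all add: field_simps)
    show "0 \<le> cos (real d * pi / real n)" using x pi_gt_zero by (intro cos_ge_zero) linarith+
    show "0 \<le> sin (real d * pi / real n)" using x pi_gt_zero by (intro sin_ge_zero) linarith+
  qed
  show thesis
  proof (cases "r \<le> p")
    case True
    then show thesis using that abs_r parity nonneg by simp
  next
    case False
    have "real r * pi / real n = pi - real (n - r) * pi / real n"
      using r assms by (simp add: field_simps of_nat_diff)
    moreover have "even (n - r) \<longleftrightarrow> even r" using r assms by auto
    ultimately show thesis
      using that[of "n - r"] False assms abs_r parity nonneg[of "n - r"] by simp
  qed
qed

section \<open>The upper bound and its attainment\<close>

definition gain :: "nat \<Rightarrow> real^3 \<Rightarrow> real^3 \<Rightarrow> nat \<Rightarrow> nat \<Rightarrow> real" where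
  "gain n e f a b = osc n e (real (2*a) * pi / real n) + osc n e (real (2*b) * pi / real n)
     + osc n f (real (2*a) * pi / real n) - osc n f (real (2*b) * pi / real n)"

lemma gain_le_abs_cos_sin:
  assumes "n = 2*p" "2 \<le> p" "is_effect n e" "is_effect n f"
  shows "gain n e f a b \<le> \<bar>cos (of_int (int a - int b) * pi / real n)\<bar> * osc_bound n (a+b)
     + \<bar>sin (of_int (int a - int b) * pi / real n)\<bar> * osc_bound n (a+b+p)"
proof -
  let ?x = "real (a+b) * pi / real n" and ?y = "of_int (int a - int b) * pi / real n"
  have xy: "?x + ?y = real (2*a) * pi / real n" "?x - ?y = real (2*b) * pi / real n"
    and x': "?x + pi/2 = real (a+b+p) * pi / real n"
    using assms(1,2) by (simp_all add: field_simps)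
  have "gain n e f a b = 2 * cos ?y * osc n e ?x + 2 * sin ?y * osc n f (real (a+b+p) * pi / real n)"
    unfolding gain_def using osc_sum_to_product[of n e ?x ?y] osc_diff_to_product[of n f ?x ?y]
    unfolding xy x' by linarith
  also have "\<dots> \<le> 2 * \<bar>cos ?y\<bar> * \<bar>osc n e ?x\<bar> + 2 * \<bar>sin ?y\<bar> * \<bar>osc n f (real (a+b+p) * pi / real n)\<bar>"
    by (intro add_mono; simp add: mult.assoc abs_ge_self flip: abs_mult)
  also have "\<dots> \<le> \<bar>cos ?y\<bar> * osc_bound n (a+b) + \<bar>sin ?y\<bar> * osc_bound n (a+b+p)"
  proof -
    have scale: "2 * \<bar>u\<bar> * \<bar>w\<bar> \<le> \<bar>u\<bar> * B" if "\<bar>w\<bar> \<le> B / 2" for u w B :: real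
      using mult_left_mono[OF that abs_ge_zero[of u]] by simp
    show ?thesis
      using effect_osc_le[OF assms(1,2,3), of "a+b"] effect_osc_le[OF assms(1,2,4), of "a+b+p"]
      by (intro add_mono scale)
  qed
  finally show ?thesis .
qed

definition gain_majorant :: "nat \<Rightarrow> nat \<Rightarrow> real \<Rightarrow> bool" where
  "gain_majorant n p K \<longleftrightarrow> (\<forall>d \<sigma>. d \<le> p \<longrightarrow> (even \<sigma> \<longleftrightarrow> even d) \<longrightarrow>
     cos (real d * pi / real n) * osc_bound n \<sigma> + sin (real d * pi / real n) * osc_bound n (\<sigma>+p) \<le> K)"

lemma gain_le_majorant:
  assumes "n = 2*p" "2 \<le> p" "is_effect n e" "is_effect n f" "gain_majorant n p K"
  shows "gain n e f a b \<le> K"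
proof -
  have "0 < p" using assms(2) by simp
  then obtain d where d: "d \<le> p" "even d \<longleftrightarrow> even (int a - int b)"
    "\<bar>cos (of_int (int a - int b) * pi / real n)\<bar> = cos (real d * pi / real n)"
    "\<bar>sin (of_int (int a - int b) * pi / real n)\<bar> = sin (real d * pi / real n)"
    by (rule abs_cos_sin_fold[OF assms(1)])
  have "even (a + b) \<longleftrightarrow> even d" using d(2) by simp
  then have "cos (real d * pi / real n) * osc_bound n (a+b)
      + sin (real d * pi / real n) * osc_bound n (a+b+p) \<le> K"
    using assms(5) d(1) unfolding gain_majorant_def by blast
  then show ?thesis using gain_le_abs_cos_sin[OF assms(1-4), of a b] d(3,4) by simp
qed

lemma inner_vert_four_sums:
  assumes "n = 2*p" "0 < p"
  shows "(e + f) \<bullet> vert n a + (e + (unit_eff - f)) \<bullet> vert n b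
       + ((unit_eff - e) + f) \<bullet> vert n (c + p) + ((unit_eff - e) + (unit_eff - f)) \<bullet> vert n (d + p)
     = 4 + gain n e f a b + gain n e f d c"
  unfolding inner_add_left inner_diff_left unit_eff_inner_vert
  unfolding inner_vert_antipodal[OF assms]
  unfolding gain_def inner_vert
  by simp

lemma Pbar_le:
  assumes "n = 2*p" "2 \<le> p" "is_dich_meas n M1" "is_dich_meas n M2" "gain_majorant n p K"
  shows "Pbar n M1 M2 \<le> 1/2 + K/4"
proof -
  have n: "0 < n" "0 < p" using assms(1,2) by simp_all
  obtain e f where M: "M1 = (e, unit_eff - e)" "M2 = (f, unit_eff - f)"
    and eff: "is_effect n e" "is_effect n (unit_eff - e)" "is_effect n f" "is_effect n (unit_eff - f)"
    using assms(3,4) unfolding is_dich_meas_def by (metis add_diff_cancel_left' prod.collapse)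
  have "\<exists>k. fnorm n (g + h) = (g + h) \<bullet> vert n k" if "is_effect n g" "is_effect n h" for g h
    using that fnorm_eq_inner_vert[OF n(1), of "g + h"] unfolding is_effect_def inner_add_left
    by (metis add_nonneg_nonneg)
  moreover have "vert n k = vert n ((k + p) + p)" for k
    using vert_add_period[of n k] assms(1) by (simp add: add.assoc mult_2)
  ultimately obtain k1 k2 k3 k4 where
    "fnorm n (e + f) = (e + f) \<bullet> vert n k1"
    "fnorm n (e + (unit_eff - f)) = (e + (unit_eff - f)) \<bullet> vert n k2"
    "fnorm n ((unit_eff - e) + f) = ((unit_eff - e) + f) \<bullet> vert n ((k3 + p) + p)"
    "fnorm n ((unit_eff - e) + (unit_eff - f)) = ((unit_eff - e) + (unit_eff - f)) \<bullet> vert n ((k4 + p) + p)"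
    using eff by metis
  then have "8 * Pbar n M1 M2 = 4 + gain n e f k1 k2 + gain n e f (k4 + p) (k3 + p)"
    unfolding Pbar_def M inner_vert_four_sums[OF assms(1) n(2), symmetric] by simp
  also have "\<dots> \<le> 4 + K + K"
    using gain_le_majorant[OF assms(1,2) eff(1,3) assms(5)] by (meson add_mono order_refl)
  finally show ?thesis by simp
qed

lemma Pbar_ge_gain:
  assumes "n = 2*p" "0 < p" "is_effect n e" "is_effect n f"
  shows "1/2 + gain n e f a b / 4 \<le> Pbar n (e, unit_eff - e) (f, unit_eff - f)"
proof -
  have "4 + 2 * gain n e f a b = (e + f) \<bullet> vert n a + (e + (unit_eff - f)) \<bullet> vert n b
       + ((unit_eff - e) + f) \<bullet> vert n (b + p) + ((unit_eff - e) + (unit_eff - f)) \<bullet> vert n (a + p)"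
    unfolding inner_vert_four_sums[OF assms(1,2)] by simp
  also have "\<dots> \<le> 8 * Pbar n (e, unit_eff - e) (f, unit_eff - f)"
    unfolding Pbar_def using assms(1,2) by (simp add: add_mono inner_vert_le_fnorm)
  finally show ?thesis by simp
qed

lemma Pbar_max_eqI:
  assumes "\<And>M1 M2. is_dich_meas n M1 \<Longrightarrow> is_dich_meas n M2 \<Longrightarrow> Pbar n M1 M2 \<le> v"
    and "is_dich_meas n M1" "is_dich_meas n M2" "Pbar n M1 M2 = v"
  shows "Pbar_max n = v"
  unfolding Pbar_max_def
proof (rule Greatest_equality)
  show "v \<in> Pbar_vals n" unfolding Pbar_vals_def using assms(2-4) by blast
  show "y \<le> v" if "y \<in> Pbar_vals n" for y using that assms(1) unfolding Pbar_vals_def by blast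
qed

definition extremal_effect :: "nat \<Rightarrow> nat \<Rightarrow> real^3" where
  "extremal_effect n j = vector [osc_bound n j / (2 * r_ngon n) * cos (real j * pi / real n),
                                 osc_bound n j / (2 * r_ngon n) * sin (real j * pi / real n), 1/2]"

lemma osc_extremal_effect:
  assumes "2 < n"
  shows "osc n (extremal_effect n j) x = osc_bound n j / 2 * cos (x - real j * pi / real n)"
proof -
  have "0 < r_ngon n"
    using cos_pi_div_gt_zero[OF assms] by (simp add: r_ngon_def sec_def)
  then show ?thesis
    by (simp add: osc_def extremal_effect_def cos_diff algebra_simps)
qed

lemma abs_cos_odd_le:
  assumes "n = 2*p" "0 < p" "odd t"
  shows "\<bar>cos (of_int t * pi / real n)\<bar> \<le> cos (pi / real n)"
proof -
  obtain d where d: "d \<le> p" "even d \<longleftrightarrow> even t"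
    "\<bar>cos (of_int t * pi / real n)\<bar> = cos (real d * pi / real n)"
    by (rule abs_cos_sin_fold[OF assms(1,2)])
  have "1 \<le> d" using d(2) assms(3) by (cases d) auto
  have "cos (real d * pi / real n) \<le> cos (pi / real n)"
  proof (rule cos_monotone_0_pi_le)
    show "pi / real n \<le> real d * pi / real n" using \<open>1 \<le> d\<close> by (simp add: divide_right_mono)
    have "real d * pi / real n \<le> pi / 2" using d(1) assms(1,2) by (simp add: field_simps)
    then show "real d * pi / real n \<le> pi" using pi_gt_zero by linarith
  qed simp
  then show ?thesis using d(3) by simp
qed

lemma is_dich_meas_extremal_effect:
  assumes "n = 2*p" "2 \<le> p"
  shows "is_dich_meas n (extremal_effect n j, unit_eff - extremal_effect n j)"
proof -
  have n: "0 < n" "2 < n" using assms by simp_all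
  have c: "0 < cos (pi / real n)" using cos_pi_div_gt_zero[OF n(2)] .
  have vert_value: "extremal_effect n j \<bullet> vert n k
      = 1/2 + osc_bound n j / 2 * cos (of_int (2 * int k - int j) * pi / real n)" for k
  proof -
    have "real (2*k) * pi / real n - real j * pi / real n = of_int (2 * int k - int j) * pi / real n"
      by (simp add: diff_divide_distrib[symmetric] algebra_simps)
    then show ?thesis
      unfolding inner_vert osc_extremal_effect[OF n(2)] by (simp add: extremal_effect_def)
  qed
  have bound: "\<bar>osc_bound n j / 2 * cos (of_int (2 * int k - int j) * pi / real n)\<bar> \<le> 1/2" for k
  proof (cases "even j")
    case False
    then have "\<bar>cos (of_int (2 * int k - int j) * pi / real n)\<bar> \<le> cos (pi / real n)"
      using assms by (intro abs_cos_odd_le[OF assms(1)]) auto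
    then show ?thesis using False c by (simp add: osc_bound_def sec_def abs_mult field_simps)
  qed (simp add: osc_bound_def abs_mult)
  have "0 \<le> extremal_effect n j \<bullet> vert n k \<and> extremal_effect n j \<bullet> vert n k \<le> 1"
    "0 \<le> (unit_eff - extremal_effect n j) \<bullet> vert n k \<and> (unit_eff - extremal_effect n j) \<bullet> vert n k \<le> 1"
    for k
    unfolding inner_diff_left unit_eff_inner_vert vert_value using bound[of k] by linarith+
  then show ?thesis
    by (simp add: is_dich_meas_def is_effect_iff_vertices[OF n(1)])
qed

lemma gain_extremal_effect:
  assumes "2 < n"
  shows "gain n (extremal_effect n j1) (extremal_effect n j2) a b
     = osc_bound n j1 / 2 * (cos (real (2*a) * pi / real n - real j1 * pi / real n)
                              + cos (real (2*b) * pi / real n - real j1 * pi / real n))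
     + osc_bound n j2 / 2 * (cos (real (2*a) * pi / real n - real j2 * pi / real n)
                              - cos (real (2*b) * pi / real n - real j2 * pi / real n))"
  unfolding gain_def osc_extremal_effect[OF assms] by (simp add: algebra_simps)

lemma Pbar_max_eq_majorant:
  assumes "n = 2*p" "2 \<le> p" "gain_majorant n p K"
    and "gain n (extremal_effect n j1) (extremal_effect n j2) a b = K"
  shows "Pbar_max n = 1/2 + K/4"
proof (rule Pbar_max_eqI)
  show "Pbar n M1 M2 \<le> 1/2 + K/4" if "is_dich_meas n M1" "is_dich_meas n M2" for M1 M2
    using Pbar_le[OF assms(1,2) that assms(3)] .
  let ?M1 = "(extremal_effect n j1, unit_eff - extremal_effect n j1)"
  let ?M2 = "(extremal_effect n j2, unit_eff - extremal_effect n j2)"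
  show "is_dich_meas n ?M1" "is_dich_meas n ?M2"
    using is_dich_meas_extremal_effect[OF assms(1,2)] by blast+
  then have eff: "is_effect n (extremal_effect n j1)" "is_effect n (extremal_effect n j2)"
    by (simp_all add: is_dich_meas_def)
  have "0 < p" using assms(2) by simp
  then have "1/2 + K/4 \<le> Pbar n ?M1 ?M2"
    using Pbar_ge_gain[OF assms(1) _ eff, of a b] assms(4) by simp
  with Pbar_le[OF assms(1,2) \<open>is_dich_meas n ?M1\<close> \<open>is_dich_meas n ?M2\<close> assms(3)]
  show "Pbar n ?M1 ?M2 = 1/2 + K/4" by linarith
qed

section \<open>The four residue classes of n modulo 8\<close>

lemma cos_add_sin_eq: "cos x + sin x = sqrt 2 * cos (x - pi/4)"
proof -
  have "sqrt 2 * cos (x - pi/4) = (sqrt 2 * sqrt 2 / 2) * (cos x + sin x)"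
    by (simp add: cos_diff cos_45 sin_45 algebra_simps)
  then show ?thesis by simp
qed

lemma gain_majorant_4m:
  assumes "n = 4*m" "0 < m"
  shows "gain_majorant n (2*m) (sqrt 2 * sec (pi / real n))"
  unfolding gain_majorant_def
proof (intro allI impI)
  fix d \<sigma> :: nat
  have c: "0 < cos (pi / real n)" using assms by (intro cos_pi_div_gt_zero) simp
  then have "0 \<le> osc_bound n \<sigma>" "osc_bound n \<sigma> \<le> sec (pi / real n)"
    using cos_le_one[of "pi / real n"] by (simp_all add: osc_bound_def sec_def field_simps)
  moreover have "cos (real d * pi / real n) + sin (real d * pi / real n) \<le> sqrt 2"
    unfolding cos_add_sin_eq by simp
  ultimately have "osc_bound n \<sigma> * (cos (real d * pi / real n) + sin (real d * pi / real n))
      \<le> osc_bound n \<sigma> * sqrt 2"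
    by (intro mult_left_mono)
  also have "\<dots> \<le> sec (pi / real n) * sqrt 2"
    using \<open>osc_bound n \<sigma> \<le> sec (pi / real n)\<close> by (intro mult_right_mono) simp_all
  finally have "osc_bound n \<sigma> * (cos (real d * pi / real n) + sin (real d * pi / real n))
      \<le> sec (pi / real n) * sqrt 2" .
  then show "cos (real d * pi / real n) * osc_bound n \<sigma>
      + sin (real d * pi / real n) * osc_bound n (\<sigma> + 2*m) \<le> sqrt 2 * sec (pi / real n)"
    by (simp add: osc_bound_def algebra_simps)
qed

lemma gain_majorant_4m_even:
  assumes "n = 4*m" "0 < m" "even m"
  shows "gain_majorant n (2*m) (sqrt 2)"
  unfolding gain_majorant_def
proof (intro allI impI)
  fix d \<sigma> :: nat assume d: "d \<le> 2*m" "even \<sigma> \<longleftrightarrow> even d"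
  have c: "0 < cos (pi / real n)" using assms by (intro cos_pi_div_gt_zero) simp
  have "osc_bound n \<sigma> * (cos (real d * pi / real n) + sin (real d * pi / real n)) \<le> sqrt 2"
  proof (cases "even d")
    case True
    then show ?thesis using d(2) unfolding cos_add_sin_eq by (simp add: osc_bound_def)
  next
    case False
    have "real d * pi / real n - pi/4 = of_int (int d - int m) * pi / real n"
      using assms(1,2) by (simp add: field_simps)
    moreover have "\<bar>cos (of_int (int d - int m) * pi / real n)\<bar> \<le> cos (pi / real n)"
      using False assms by (intro abs_cos_odd_le[of n "2*m"]) auto
    ultimately have "cos (real d * pi / real n) + sin (real d * pi / real n) \<le> sqrt 2 * cos (pi / real n)"
      unfolding cos_add_sin_eq by (simp add: abs_le_iff)
    then show ?thesis using False d(2) c by (simp add: osc_bound_def sec_def field_simps)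
  qed
  then show "cos (real d * pi / real n) * osc_bound n \<sigma>
      + sin (real d * pi / real n) * osc_bound n (\<sigma> + 2*m) \<le> sqrt 2"
    by (simp add: osc_bound_def algebra_simps)
qed

lemma gain_extremal_effect_4m:
  assumes "n = 4*m" "0 < m"
  shows "gain n (extremal_effect n m) (extremal_effect n (3*m)) m 0 = sqrt 2 * osc_bound n m"
proof -
  have "real n = 4 * real m" using assms(1) by simp
  then have "real m * pi / real n = pi/4"
    "real (2*m) * pi / real n - real m * pi / real n = pi/4"
    "real (2*m) * pi / real n - real (3*m) * pi / real n = - (pi/4)"
    and three_quarters: "real (3*m) * pi / real n = pi - pi/4"
    using assms(2) by (simp_all add: field_simps)
  moreover have "cos (real (3*m) * pi / real n) = - (sqrt 2 / 2)"
    unfolding three_quarters cos_pi_minus cos_45 ..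
  moreover have "osc_bound n (3*m) = osc_bound n m" by (simp add: osc_bound_def)
  ultimately show ?thesis
    using assms by (simp add: gain_extremal_effect cos_45)
qed

lemma cos_sin_complement:
  assumes "n = 2*p" "0 < p" "d \<le> p"
  shows "cos (real (p - d) * pi / real n) = sin (real d * pi / real n)"
    and "sin (real (p - d) * pi / real n) = cos (real d * pi / real n)"
proof -
  have "real (p - d) * pi / real n = pi/2 - real d * pi / real n"
    using assms by (simp add: of_nat_diff field_simps)
  then show "cos (real (p - d) * pi / real n) = sin (real d * pi / real n)"
    and "sin (real (p - d) * pi / real n) = cos (real d * pi / real n)"
    by (simp_all add: cos_diff sin_diff)
qed

lemma sin_le_cos_pi_div_mul_cos:
  assumes "n = 4*m + 2" "0 \<le> x" "x \<le> real m * pi / real n"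
  shows "sin x \<le> cos (pi / real n) * cos x"
proof -
  let ?t = "pi / real n" and ?a = "real m * pi / real n"
  have t: "0 \<le> cos ?t" "0 \<le> sin ?t" "0 < ?t" "?t \<le> pi/2"
    using assms(1) pi_gt_zero by (auto intro!: cos_ge_zero sin_ge_zero simp: field_simps)
  have a: "?a \<le> pi/2" using assms(1) by (simp add: field_simps)
  have "sin ?a = cos (real (2*m+1 - m) * pi / real n)"
    using cos_sin_complement(1)[of n "2*m+1" m] assms(1) by simp
  also have "real (2*m+1 - m) * pi / real n = ?a + ?t"
    by (simp add: add_divide_distrib[symmetric] algebra_simps)
  finally have "sin ?a = cos ?t * cos ?a - sin ?a * sin ?t" by (simp add: cos_add mult.commute)
  moreover have "0 \<le> sin ?a" using a pi_gt_zero by (intro sin_ge_zero) (simp, linarith)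
  then have "0 \<le> sin ?a * sin ?t" using t(2) by simp
  ultimately have "sin ?a \<le> cos ?t * cos ?a" by linarith
  moreover have "sin x \<le> sin ?a" using assms(2,3) a pi_gt_zero by (intro sin_monotone_2pi_le) linarith+
  moreover have "cos ?a \<le> cos x" using assms(2,3) a pi_gt_zero by (intro cos_monotone_0_pi_le) linarith+
  ultimately show ?thesis using t(1) by (meson mult_left_mono order_trans)
qed

lemma cos_pi_div_mul_cos_le_sin:
  assumes "n = 4*m + 2" "real (m+1) * pi / real n \<le> x" "x \<le> pi/2"
  shows "cos (pi / real n) * cos x \<le> sin x"
proof -
  let ?t = "pi / real n" and ?a = "real (m+1) * pi / real n"
  have t: "0 \<le> cos ?t" "0 \<le> sin ?t" "0 < ?t" "?t \<le> pi/2"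
    using assms(1) pi_gt_zero by (auto intro!: cos_ge_zero sin_ge_zero simp: field_simps)
  have a: "0 \<le> ?a" "?a \<le> pi/2" using assms(2,3) by (simp, linarith)
  have "cos (real m * pi / real n) = sin (real (2*m+1 - m) * pi / real n)"
    using cos_sin_complement(2)[of n "2*m+1" m] assms(1) by simp
  moreover have "real m * pi / real n = ?a - ?t"
    by (simp add: diff_divide_distrib[symmetric] algebra_simps)
  moreover have "2*m+1 - m = m+1" by simp
  ultimately have "sin ?a = cos ?t * cos ?a + sin ?a * sin ?t" by (simp add: cos_diff mult.commute)
  moreover have "0 \<le> sin ?a" using a pi_gt_zero by (intro sin_ge_zero) linarith+
  then have "0 \<le> sin ?a * sin ?t" using t(2) by simp
  ultimately have "cos ?t * cos ?a \<le> sin ?a" by linarith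
  moreover have "sin ?a \<le> sin x" using assms(2,3) a pi_gt_zero by (intro sin_monotone_2pi_le) linarith+
  moreover have "cos x \<le> cos ?a" using assms(2,3) a pi_gt_zero by (intro cos_monotone_0_pi_le) linarith+
  ultimately show ?thesis using t(1) by (meson mult_left_mono order_trans)
qed

lemma cos_add_mul_sin_odd_le:
  assumes n: "n = 4*m + 2" and q: "odd q" "m \<le> q" "q \<le> m+1" and k: "odd k" "k \<le> 2*m+1"
  shows "cos (real k * pi / real n) + cos (pi / real n) * sin (real k * pi / real n)
       \<le> cos (real q * pi / real n) + cos (pi / real n) * sin (real q * pi / real n)"
proof -
  let ?c = "cos (pi / real n)"
  define x where "x = (real q + real k) * pi / (2 * real n)"
  define y where "y = (real q - real k) * pi / (2 * real n)"
  have "0 < real n" using n by simp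
  then have xy: "real q * pi / real n = x + y" "real k * pi / real n = x - y"
    unfolding x_def y_def by (simp_all add: field_simps)
  have mono: "u * pi / (2 * real n) \<le> v * pi / (2 * real n)" if "u \<le> v" for u v
    using that \<open>0 < real n\<close> by (intro divide_right_mono mult_right_mono) simp_all
  have half: "real j * pi / real n = (2 * real j) * pi / (2 * real n)" for j by simp
  have "real k \<le> real q + 2 * real n" "real q \<le> real k + 2 * real n" "0 \<le> x"
    using n k q by (simp_all add: x_def)
  then have y_range: "- pi \<le> y" "y \<le> pi"
    using mono[of "real q - real k" "2 * real n"] mono[of "- 2 * real n" "real q - real k"]
      \<open>0 < real n\<close> by (simp_all add: y_def)
  \<comment> \<open>the difference is 2 sin y (c cos x - sin x), and both factors change sign together\<close>
  have "0 \<le> 2 * sin y * (?c * cos x - sin x)"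
  proof (cases k q rule: linorder_cases)
    case less
    with q k have "q + k \<le> 2*m" "k \<le> q" by presburger+
    then have "real q + real k \<le> 2 * real m" "real k \<le> real q" by linarith+
    then have "x \<le> real m * pi / real n" "0 \<le> y"
      using mono[of "real q + real k" "2 * real m"] unfolding half by (simp_all add: x_def y_def)
    then have "0 \<le> sin y" "sin x \<le> ?c * cos x"
      using y_range sin_le_cos_pi_div_mul_cos[OF n \<open>0 \<le> x\<close>] by (simp_all add: sin_ge_zero)
    then show ?thesis by simp
  next
    case greater
    with q k have "2 * (m+1) \<le> q + k" "q \<le> k" by presburger+
    moreover have "q + k \<le> n" using q k n by linarith
    ultimately have "2 * real (m+1) \<le> real q + real k" "real q + real k \<le> real n" "real q \<le> real k"
      by linarith+
    then have "real (m+1) * pi / real n \<le> x" "x \<le> pi/2" "y \<le> 0"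
      using mono[of "2 * real (m+1)" "real q + real k"] mono[of "real q + real k" "real n"]
        mono[of "real q - real k" 0]
        \<open>0 < real n\<close> unfolding half by (simp_all add: x_def y_def)
    then have "sin y \<le> 0" "?c * cos x \<le> sin x"
      using y_range sin_ge_zero[of "- y"] cos_pi_div_mul_cos_le_sin[OF n] by simp_all
    then show ?thesis by (simp add: mult_nonpos_nonpos)
  qed (simp add: y_def)
  also have "\<dots> = (cos (x + y) + ?c * sin (x + y)) - (cos (x - y) + ?c * sin (x - y))"
    by (simp add: cos_add cos_diff sin_add sin_diff algebra_simps)
  finally show ?thesis unfolding xy by simp
qed

lemma gain_majorant_4m2:
  assumes n: "n = 4*m + 2" "0 < m" and q: "odd q" "m \<le> q" "q \<le> m+1"
  shows "gain_majorant n (2*m+1) (sec (pi / real n) * cos (real q * pi / real n) + sin (real q * pi / real n))"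
  unfolding gain_majorant_def
proof (intro allI impI)
  let ?K = "sec (pi / real n) * cos (real q * pi / real n) + sin (real q * pi / real n)"
  fix d \<sigma> :: nat assume d: "d \<le> 2*m+1" "even \<sigma> \<longleftrightarrow> even d"
  have c: "0 < cos (pi / real n)" using n by (intro cos_pi_div_gt_zero) simp
  have odd_le: "sec (pi / real n) * cos (real k * pi / real n) + sin (real k * pi / real n) \<le> ?K"
    if "odd k" "k \<le> 2*m+1" for k
    using divide_right_mono[OF cos_add_mul_sin_odd_le[OF n(1) q that] less_imp_le[OF c]] c
    by (simp add: sec_def add_divide_distrib)
  show "cos (real d * pi / real n) * osc_bound n \<sigma>
      + sin (real d * pi / real n) * osc_bound n (\<sigma> + (2*m+1)) \<le> ?K"
  proof (cases "even d")
    case False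
    then show ?thesis using d odd_le[of d] by (simp add: osc_bound_def mult.commute)
  next
    case True
    then have "odd (2*m+1 - d)" using d(1) by simp
    then show ?thesis
      using d True odd_le[of "2*m+1 - d"] cos_sin_complement[of n "2*m+1" d] n(1)
      by (simp add: osc_bound_def mult.commute)
  qed
qed

lemma gain_extremal_effect_4m2:
  assumes "n = 4*m + 2" "0 < m" "odd q"
  shows "gain n (extremal_effect n q) (extremal_effect n (q + (2*m+1))) q 0
       = sec (pi / real n) * cos (real q * pi / real n) + sin (real q * pi / real n)"
proof -
  have quarter: "real (2*m+1) * pi / real n = pi/2" using assms(1) by (simp add: field_simps)
  have "real (q + (2*m+1)) * pi / real n = real q * pi / real n + real (2*m+1) * pi / real n"
    by (simp add: add_divide_distrib distrib_right)
  moreover have "real (2*q) * pi / real n - real (q + (2*m+1)) * pi / real n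
      = real q * pi / real n - real (2*m+1) * pi / real n"
    using assms(1) by (simp add: field_simps)
  moreover have "real (2*q) * pi / real n - real q * pi / real n = real q * pi / real n"
    by (simp add: field_simps)
  ultimately have angles: "real (2*q) * pi / real n - real q * pi / real n = real q * pi / real n"
    "real (2*q) * pi / real n - real (q + (2*m+1)) * pi / real n = real q * pi / real n - pi/2"
    "real (2*0) * pi / real n - real (q + (2*m+1)) * pi / real n = - (real q * pi / real n + pi/2)"
    "real (2*0) * pi / real n - real q * pi / real n = - (real q * pi / real n)"
    unfolding quarter by simp_all
  have "osc_bound n q = sec (pi / real n)" "osc_bound n (q + (2*m+1)) = 1"
    using assms(3) by (simp_all add: osc_bound_def)
  moreover have "2 < n" using assms(1,2) by simp
  ultimately show ?thesis
    unfolding gain_extremal_effect[OF \<open>2 < n\<close>] angles cos_minus by (simp add: cos_diff cos_add)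
qed

lemma Pbar_max_4m:
  assumes "n = 4*m" "0 < m"
  shows "Pbar_max n = (1/2) * (1 + osc_bound n m / sqrt 2)"
proof -
  have "gain_majorant n (2*m) (sqrt 2 * osc_bound n m)"
    using gain_majorant_4m[OF assms] gain_majorant_4m_even[OF assms]
    by (cases "even m") (simp_all add: osc_bound_def)
  from this gain_extremal_effect_4m[OF assms] have "Pbar_max n = 1/2 + sqrt 2 * osc_bound n m / 4"
    by (rule Pbar_max_eq_majorant[rotated 2]) (use assms in simp_all)
  also have "\<dots> = (1/2) * (1 + osc_bound n m / sqrt 2)"
    by (simp add: field_simps)
  finally show ?thesis .
qed

lemma Pbar_max_4m2:
  assumes "n = 4*m + 2" "0 < m" "odd q" "m \<le> q" "q \<le> m+1"
  shows "Pbar_max n = 1/2 + (sec (pi / real n) * cos (real q * pi / real n) + sin (real q * pi / real n)) / 4"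
  using gain_majorant_4m2[OF assms] gain_extremal_effect_4m2[OF assms(1-3)]
  by (rule Pbar_max_eq_majorant[rotated 2]) (use assms in simp_all)

theorem mainTheorem15:
  fixes n m :: nat
  assumes "even n" and "n \<ge> 4" and "m \<ge> 1"
  shows "(n = 4 * m \<and> odd m \<longrightarrow>
            Pbar_max n = (1/2) * (1 + sec (pi / real n) / sqrt 2))
       \<and> (n = 4 * m \<and> even m \<longrightarrow>
            Pbar_max n = (1/2) * (1 + 1 / sqrt 2))
       \<and> (n = 4 * m + 2 \<and> odd m \<longrightarrow>
            Pbar_max n = (1/4) * (2 + sec (pi / real n) * cos (real m * pi / real n)
                                    + sin (real m * pi / real n)))
       \<and> (n = 4 * m + 2 \<and> even m \<longrightarrow>
            Pbar_max n = (1/4) * (2 + cos (real m * pi / real n)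
                                    + sec (pi / real n) * sin (real m * pi / real n)))"
proof (intro conjI impI; elim conjE)
  assume "n = 4*m" and "odd m"
  then show "Pbar_max n = (1/2) * (1 + sec (pi / real n) / sqrt 2)"
    using Pbar_max_4m[of n m] assms(3) by (simp add: osc_bound_def)
next
  assume "n = 4*m" and "even m"
  then show "Pbar_max n = (1/2) * (1 + 1 / sqrt 2)"
    using Pbar_max_4m[of n m] assms(3) by (simp add: osc_bound_def)
next
  assume "n = 4*m + 2" and "odd m"
  then show "Pbar_max n = (1/4) * (2 + sec (pi / real n) * cos (real m * pi / real n)
      + sin (real m * pi / real n))"
    using Pbar_max_4m2[of n m m] assms(3) by simp
next
  assume "n = 4*m + 2" and "even m"
  then show "Pbar_max n = (1/4) * (2 + cos (real m * pi / real n)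
      + sec (pi / real n) * sin (real m * pi / real n))"
    using Pbar_max_4m2[of n m "m+1"] cos_sin_complement[of n "2*m+1" m] assms(3) by simp
qed

end
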